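(* Let $\mathcal{H}_A\cong\mathcal{H}_B\cong\mathbb{C}^d$ with $d\ge2$, and $O_+=\sum_{\vec a\in\mathbb{Z}_d^3}\big[1+(-d)^{wt(\vec a)-1}\big]|\vec a\rangle\langle\vec a|$ on $(\mathbb{C}^d)^{\otimes3}$. For every density operator $\rho_{AB}$ on $\mathcal{H}_A\otimes\mathcal{H}_B$, with marginals $\rho_A,\rho_B$, $$\begin{aligned}\mathrm{Tr}\big[(\Phi^3_A(O_+^2)\otimes\Phi^3_B(O_+^2))\rho_{AB}^{\otimes3}\big]=\frac{1}{(d+2)^2}\Big\{&\big[\mathrm{Tr}(\rho_A^2)+\mathrm{Tr}(\rho_B^2)\big]\,3d(d-1)^2(d+1)(d^2+3d+4)\\&+\big[\mathrm{Tr}(\rho_A^3)+\mathrm{Tr}(\rho_B^3)\big]\,2(d-1)\big((d-1)d^2+6\big)(d^2+3d+4)\\&+\mathrm{Tr}(\rho_{AB}^2)\,3d^2(d^2-1)^2+\mathrm{Tr}(\rho_{AB}^3)\,2\big((d-1)d^2+6\big)^2\\&+\mathrm{Tr}[\rho_{AB}(\rho_A\otimes\rho_B)]\,6d^2(d^2-1)^2\\&+\big[\mathrm{Tr}(\rho_{AB}^2(\rho_A\otimes I))+\mathrm{Tr}(\rho_{AB}^2(I\otimes\rho_B))\big]\,6d(d-1)(d+1)\big((d-1)d^2+6\big)\\&+2\,\mathrm{Tr}[(\rho_{AB}^{T_A})^3]\big((d-1)d^2+6\big)^2+\big(d(d+1)^2-4\big)^2\Big\}.\end{aligned}$$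
   Context: $wt(\vec a)$ is the largest number of equal entries of $\vec a=(a_1,a_2,a_3)$ (1 if pairwise distinct, 2 if exactly two coincide, 3 if all coincide). $\Phi^3(X)=\int dU\,U^{\otimes3}XU^{\dagger\otimes3}$ with $U$ Haar-random on $U(d)$ (or from a unitary 3-design), applied independently on $\mathcal{H}_A^{\otimes3}$ and $\mathcal{H}_B^{\otimes3}$, with $(\mathcal{H}_A\otimes\mathcal{H}_B)^{\otimes3}\cong\mathcal{H}_A^{\otimes3}\otimes\mathcal{H}_B^{\otimes3}$. $\rho_{AB}^{T_A}$ is the partial transpose with respect to $A$ in the computational basis. *)

theory Defs
  imports "HOL-Probability.Probability"
begin

text \<open>Operators on a finite-dimensional Hilbert space with orthonormal (computational)
basis indexed by a finite type 'a are represented as complex matrices 'a => 'a => complex.\<close>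

type_synonym 'a op = "'a \<Rightarrow> 'a \<Rightarrow> complex"

definition mmul :: "('a::finite) op \<Rightarrow> 'a op \<Rightarrow> 'a op" where
  "mmul X Y = (\<lambda>i j. \<Sum>k\<in>UNIV. X i k * Y k j)"

definition tr :: "('a::finite) op \<Rightarrow> complex" where
  "tr X = (\<Sum>i\<in>UNIV. X i i)"

definition idop :: "'a op" where
  "idop = (\<lambda>i j. if i = j then 1 else 0)"

definition kron :: "'a op \<Rightarrow> 'b op \<Rightarrow> ('a \<times> 'b) op" where
  "kron X Y = (\<lambda>(a, b) (a', b'). X a a' * Y b b')"

definition ptrB :: "('a \<times> 'b::finite) op \<Rightarrow> 'a op" where
  "ptrB R = (\<lambda>a a'. \<Sum>b\<in>UNIV. R (a, b) (a', b))"

definition ptrA :: "('a::finite \<times> 'b) op \<Rightarrow> 'b op" where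
  "ptrA R = (\<lambda>b b'. \<Sum>a\<in>UNIV. R (a, b) (a, b'))"

definition ptransA :: "('a \<times> 'b) op \<Rightarrow> ('a \<times> 'b) op" where
  "ptransA R = (\<lambda>(a, b) (a', b'). R (a', b) (a, b'))"

definition density :: "('a::finite) op \<Rightarrow> bool" where
  "density R \<longleftrightarrow>
     (\<forall>v :: 'a \<Rightarrow> complex.
        (\<Sum>i\<in>UNIV. \<Sum>j\<in>UNIV. cnj (v i) * R i j * v j) \<in> \<real> \<and>
        0 \<le> Re (\<Sum>i\<in>UNIV. \<Sum>j\<in>UNIV. cnj (v i) * R i j * v j)) \<and> tr R = 1"

definition cadj :: "complex^'n^'n \<Rightarrow> complex^'n^'n" where
  "cadj U = (\<chi> i j. cnj (U $ j $ i))"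

definition unitary_mat :: "complex^'n^'n \<Rightarrow> bool" where
  "unitary_mat U \<longleftrightarrow> U ** cadj U = mat 1 \<and> cadj U ** U = mat 1"

definition haar_measure :: "(complex^'n^'n) measure \<Rightarrow> bool" where
  "haar_measure \<mu> \<longleftrightarrow>
     prob_space \<mu> \<and> sets \<mu> = sets borel \<and> (AE U in \<mu>. unitary_mat U) \<and>
     (\<forall>V. unitary_mat V \<longrightarrow> distr \<mu> borel (\<lambda>U. V ** U) = \<mu>)"

definition U3 :: "complex^'n^'n \<Rightarrow> ('n \<times> 'n \<times> 'n) op" where
  "U3 U = (\<lambda>(a1, a2, a3) (c1, c2, c3). U $ a1 $ c1 * U $ a2 $ c2 * U $ a3 $ c3)"

definition twirl3 :: "(complex^'n^'n) measure \<Rightarrow> ('n::finite \<times> 'n \<times> 'n) op \<Rightarrow> ('n \<times> 'n \<times> 'n) op" where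
  "twirl3 \<mu> X = (\<lambda>a b. \<integral>U. (\<Sum>c\<in>UNIV. \<Sum>e\<in>UNIV. U3 U a c * X c e * cnj (U3 U b e)) \<partial>\<mu>)"

text \<open>wt(a): largest number of equal entries of a triple.\<close>
definition wt :: "'n \<times> 'n \<times> 'n \<Rightarrow> nat" where
  "wt = (\<lambda>(a1, a2, a3). if a1 = a2 \<and> a2 = a3 then 3
                         else if a1 = a2 \<or> a2 = a3 \<or> a1 = a3 then 2 else 1)"

definition O_plus :: "('n::finite \<times> 'n \<times> 'n) op" where
  "O_plus = (\<lambda>a b. if a = b then 1 + (- of_nat CARD('n)) ^ (wt a - 1) else 0)"

text \<open>Tr[(M_A (x) M_B) rho^{(x)3}] using (H_A (x) H_B)^{(x)3} = H_A^{(x)3} (x) H_B^{(x)3}.\<close>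
definition tr_AB3 :: "('n \<times> 'n \<times> 'n) op \<Rightarrow> ('m \<times> 'm \<times> 'm) op \<Rightarrow> ('n::finite \<times> 'm::finite) op \<Rightarrow> complex" where
  "tr_AB3 MA MB R =
     (\<Sum>a\<in>UNIV. \<Sum>a'\<in>UNIV. \<Sum>b\<in>UNIV. \<Sum>b'\<in>UNIV.
        MA a a' * MB b b' *
        (case (a, a', b, b') of ((a1, a2, a3), (a1', a2', a3'), (b1, b2, b3), (b1', b2', b3')) \<Rightarrow>
           R (a1', b1') (a1, b1) * R (a2', b2') (a2, b2) * R (a3', b3') (a3, b3)))"

end

theory Submission
  imports Defs "HOL-Library.Multiset"
begin

text \<open>
  Everything reduces to the third moments of one column of a Haar unitary:
  E[U_{a1 k} U_{a2 k} U_{a3 k} cnj (U_{b1 k} U_{b2 k} U_{b3 k})] is the number of permutations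
  \<open>\<sigma> \<in> S\<^sub>3\<close> with \<open>a = \<sigma> b\<close>, divided by d (d + 1) (d + 2).  Invariance of the Haar measure under
  diagonal phases kills the moments of triples that are not rearrangements of each other, invariance
  under transpositions of coordinates and under a rotation with rational entries relates the
  remaining ones, and the unit norm of the column fixes the scale.

  \<open>O\<^sub>+\<^sup>2\<close> is diagonal, with weight 4, plus \<open>(1 - d)\<^sup>2 - 4\<close> for every pair of coinciding entries,
  plus \<open>(1 + d\<^sup>2)\<^sup>2 - 3 (1 - d)\<^sup>2 + 8\<close> when all three entries agree.  The moments turn its twirl into
  \<open>\<alpha> I + \<beta> (sum of the transpositions) + \<gamma> (sum of the 3-cycles)\<close>.  Finally
  \<open>Tr[(P\<^sub>\<sigma> \<otimes> P\<^sub>\<tau>) \<rho>\<^sup>\<otimes>\<^sup>3]\<close> only depends on the simultaneous conjugacy class of \<open>(\<sigma>, \<tau>)\<close>, and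
  the eleven classes of \<open>S\<^sub>3 \<times> S\<^sub>3\<close> give the eleven trace invariants of the formula.
\<close>

section \<open>Haar-distributed unitaries\<close>

lemma haar_measureD:
  assumes "haar_measure \<mu>"
  shows "prob_space \<mu>" "sets \<mu> = sets borel" "AE U in \<mu>. unitary_mat U"
  using assms unfolding haar_measure_def by auto

lemma haar_measurable:
  assumes "haar_measure \<mu>" "h \<in> borel_measurable borel"
  shows "h \<in> borel_measurable \<mu>"
  using assms(2) measurable_cong_sets[OF haar_measureD(2)[OF assms(1)] refl] by blast

lemma haar_integral_left_mult:
  fixes \<mu> :: "(complex^'n::finite^'n) measure" and h :: "complex^'n^'n \<Rightarrow> complex"
  assumes "haar_measure \<mu>" "unitary_mat V" "h \<in> borel_measurable borel"
  shows "(\<integral>U. h (V ** U) \<partial>\<mu>) = (\<integral>U. h U \<partial>\<mu>)"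
proof -
  have "(\<lambda>U. V ** U) \<in> borel_measurable borel"
    unfolding matrix_matrix_mult_def by (intro borel_measurable_continuous_onI continuous_intros)
  then have "(\<lambda>U. V ** U) \<in> measurable \<mu> borel"
    by (rule haar_measurable[OF assms(1)])
  then have "(\<integral>U. h (V ** U) \<partial>\<mu>) = (\<integral>U. h U \<partial>distr \<mu> borel (\<lambda>U. V ** U))"
    by (rule integral_distr[symmetric]) (rule assms(3))
  also have "\<dots> = (\<integral>U. h U \<partial>\<mu>)"
    using assms(1,2) unfolding haar_measure_def by simp
  finally show ?thesis .
qed

lemma haar_integrable_bounded:
  fixes \<mu> :: "(complex^'n::finite^'n) measure" and h :: "complex^'n^'n \<Rightarrow> complex"
  assumes "haar_measure \<mu>" "h \<in> borel_measurable borel" "\<And>U. unitary_mat U \<Longrightarrow> norm (h U) \<le> B"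
  shows "integrable \<mu> h"
proof -
  interpret prob_space \<mu> by (rule haar_measureD(1)[OF assms(1)])
  show ?thesis
    using haar_measureD(3)[OF assms(1)] assms(3) haar_measurable[OF assms(1,2)]
    by (intro integrable_const_bound[where B = B]) auto
qed

lemma unitary_rows_orthonormal:
  "unitary_mat U \<Longrightarrow> (\<Sum>j\<in>UNIV. U$a$j * cnj (U$b$j)) = of_bool (a = b)"
  unfolding unitary_mat_def
  by (drule conjunct1, drule arg_cong[where f = "\<lambda>M. M$a$b"])
     (simp add: matrix_matrix_mult_def cadj_def mat_def)

lemma unitary_cols_orthonormal:
  "unitary_mat U \<Longrightarrow> (\<Sum>i\<in>UNIV. cnj (U$i$a) * U$i$b) = of_bool (a = b)"
  unfolding unitary_mat_def
  by (drule conjunct2, drule arg_cong[where f = "\<lambda>M. M$a$b"])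
     (simp add: matrix_matrix_mult_def cadj_def mat_def)

lemma unitary_entry_norm_le_1:
  assumes "unitary_mat U"
  shows "norm (U$i$j) \<le> 1"
proof -
  have "(\<Sum>j\<in>UNIV. U$i$j * cnj (U$i$j)) = 1"
    using unitary_rows_orthonormal[OF assms, of i i] by simp
  then have "(\<Sum>j\<in>UNIV. complex_of_real ((cmod (U$i$j))\<^sup>2)) = 1"
    by (simp only: complex_norm_square)
  then have "(\<Sum>j\<in>UNIV. (cmod (U$i$j))\<^sup>2) = 1"
    by (metis of_real_eq_1_iff of_real_sum)
  moreover have "(cmod (U$i$j))\<^sup>2 \<le> (\<Sum>j\<in>UNIV. (cmod (U$i$j))\<^sup>2)"
    by (rule member_le_sum) auto
  ultimately show ?thesis
    by (simp add: power_le_one_iff abs_le_square_iff)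
qed

section \<open>Third moments of a column\<close>

fun colprod :: "complex^'n^'n \<Rightarrow> 'n \<Rightarrow> 'n \<times> 'n \<times> 'n \<Rightarrow> complex" where
  "colprod U k (a1, a2, a3) = U$a1$k * U$a2$k * U$a3$k"

definition col_moment :: "(complex^'n::finite^'n) measure \<Rightarrow> 'n \<Rightarrow> 'n \<times> 'n \<times> 'n \<Rightarrow> 'n \<times> 'n \<times> 'n \<Rightarrow> complex" where
  "col_moment \<mu> k a b = (\<integral>U. colprod U k a * cnj (colprod U k b) \<partial>\<mu>)"

lemma colprod_moment_measurable:
  "(\<lambda>U::complex^'n::finite^'n. colprod U k a * cnj (colprod U k b)) \<in> borel_measurable borel"
  by (cases a, cases b) (auto intro!: borel_measurable_continuous_onI continuous_intros)

lemma colprod_norm_le_1: "unitary_mat U \<Longrightarrow> norm (colprod U k a) \<le> 1"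
  by (cases a) (auto simp: norm_mult intro!: mult_le_one unitary_entry_norm_le_1)

lemma colprod_moment_integrable:
  fixes \<mu> :: "(complex^'n::finite^'n) measure"
  assumes "haar_measure \<mu>"
  shows "integrable \<mu> (\<lambda>U. colprod U k a * cnj (colprod U k b))"
  using assms colprod_moment_measurable
  by (rule haar_integrable_bounded)
     (auto simp: norm_mult intro: mult_le_one colprod_norm_le_1)

lemma col_moment_invariant:
  fixes \<mu> :: "(complex^'n::finite^'n) measure"
  assumes "haar_measure \<mu>" "unitary_mat V"
  shows "col_moment \<mu> k a b = (\<integral>U. colprod (V ** U) k a * cnj (colprod (V ** U) k b) \<partial>\<mu>)"
  unfolding col_moment_def
  by (rule haar_integral_left_mult[OF assms colprod_moment_measurable, symmetric])

lemma col_moment_sesquilinear: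
  fixes \<mu> :: "(complex^'n::finite^'n) measure"
  assumes "haar_measure \<mu>" "finite J"
  shows "(\<integral>U. (\<Sum>j\<in>J. c j * colprod U k (t j)) * cnj (\<Sum>l\<in>J. c l * colprod U k (t l)) \<partial>\<mu>)
     = (\<Sum>j\<in>J. \<Sum>l\<in>J. c j * cnj (c l) * col_moment \<mu> k (t j) (t l))"
proof -
  have "(\<Sum>j\<in>J. c j * colprod U k (t j)) * cnj (\<Sum>l\<in>J. c l * colprod U k (t l))
     = (\<Sum>j\<in>J. \<Sum>l\<in>J. c j * cnj (c l) * (colprod U k (t j) * cnj (colprod U k (t l))))" for U
    by (simp add: cnj_sum sum_product mult_ac)
  then show ?thesis
    unfolding col_moment_def
    by (simp add: colprod_moment_integrable[OF assms(1)] Bochner_Integration.integrable_sum)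
qed

fun swap12 :: "'n \<times> 'n \<times> 'n \<Rightarrow> 'n \<times> 'n \<times> 'n" where "swap12 (x, y, z) = (y, x, z)"
fun swap13 :: "'n \<times> 'n \<times> 'n \<Rightarrow> 'n \<times> 'n \<times> 'n" where "swap13 (x, y, z) = (z, y, x)"
fun swap23 :: "'n \<times> 'n \<times> 'n \<Rightarrow> 'n \<times> 'n \<times> 'n" where "swap23 (x, y, z) = (x, z, y)"
fun rotl :: "'n \<times> 'n \<times> 'n \<Rightarrow> 'n \<times> 'n \<times> 'n" where "rotl (x, y, z) = (y, z, x)"
fun rotr :: "'n \<times> 'n \<times> 'n \<Rightarrow> 'n \<times> 'n \<times> 'n" where "rotr (x, y, z) = (z, x, y)"

definition rearrangement :: "'n \<times> 'n \<times> 'n \<Rightarrow> 'n \<times> 'n \<times> 'n \<Rightarrow> bool" where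
  "rearrangement a b \<longleftrightarrow>
     a = b \<or> a = swap12 b \<or> a = swap13 b \<or> a = swap23 b \<or> a = rotl b \<or> a = rotr b"

definition perm_count :: "'n \<times> 'n \<times> 'n \<Rightarrow> 'n \<times> 'n \<times> 'n \<Rightarrow> complex" where
  "perm_count a b = of_bool (a = b) + of_bool (a = swap12 b) + of_bool (a = swap13 b)
     + of_bool (a = swap23 b) + of_bool (a = rotl b) + of_bool (a = rotr b)"

fun occurrences :: "'n \<Rightarrow> 'n \<times> 'n \<times> 'n \<Rightarrow> nat" where
  "occurrences x (a1, a2, a3) = of_bool (a1 = x) + of_bool (a2 = x) + of_bool (a3 = x)"

lemma rearrangement_if_same_occurrences:
  assumes "\<And>x. occurrences x a = occurrences x b"
  shows "rearrangement a b"
proof -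
  obtain a1 a2 a3 b1 b2 b3 where ab: "a = (a1, a2, a3)" "b = (b1, b2, b3)"
    by (cases a, cases b)
  have "count {#a1, a2, a3#} x = count {#b1, b2, b3#} x" for x
    using assms[of x] unfolding ab by (auto simp: of_bool_def split: if_splits)
  then have "{#a1, a2, a3#} = {#b1, b2, b3#}"
    by (rule multiset_eqI)
  then show ?thesis
    unfolding ab rearrangement_def by (auto simp: add_eq_conv_ex)
qed

lemma colprod_rearrangement: "rearrangement a b \<Longrightarrow> colprod U k a = colprod U k b"
  by (cases b) (auto simp: rearrangement_def mult_ac)

definition phase_mat :: "'n::finite \<Rightarrow> complex^'n^'n" where
  "phase_mat x = (\<chi> i j. if i = j then (if i = x then \<i> else 1) else 0)"

lemma phase_mat_mult: "(phase_mat x ** U)$i$k = (if i = x then \<i> else 1) * U$i$k"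
  unfolding matrix_matrix_mult_def phase_mat_def
  by (simp add: if_distrib[where f = "\<lambda>z. z * _"] cong: if_cong)

lemma phase_mat_unitary: "unitary_mat (phase_mat x)"
  unfolding unitary_mat_def
  by (auto simp: vec_eq_iff matrix_matrix_mult_def cadj_def phase_mat_def mat_def
      if_distrib[where f = "\<lambda>z. z * _"] if_distrib[where f = cnj] if_distrib[where f = "\<lambda>z. _ * z"]
      cong: if_cong)

lemma colprod_phase_mat: "colprod (phase_mat x ** U) k a = \<i> ^ occurrences x a * colprod U k a"
  by (cases a) (auto simp: phase_mat_mult power_add)

lemma imag_unit_pow_neq:
  assumes "m \<le> 3" "n \<le> 3" "m \<noteq> n"
  shows "\<i> ^ m * cnj (\<i> ^ n) \<noteq> 1"
proof -
  have "m \<in> {0, 1, 2, 3}" "n \<in> {0, 1, 2, 3}"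
    using assms by auto
  then show ?thesis
    using assms(3) by (auto simp: numeral_eq_Suc complex_eq_iff)
qed

lemma col_moment_eq_0_if_occurrences_differ:
  fixes \<mu> :: "(complex^'n::finite^'n) measure"
  assumes "haar_measure \<mu>" "occurrences x a \<noteq> occurrences x b"
  shows "col_moment \<mu> k a b = 0"
proof -
  define z where "z = \<i> ^ occurrences x a * cnj (\<i> ^ occurrences x b)"
  have "col_moment \<mu> k a b = (\<integral>U. z * (colprod U k a * cnj (colprod U k b)) \<partial>\<mu>)"
    unfolding col_moment_invariant[OF assms(1) phase_mat_unitary[of x]] colprod_phase_mat z_def
    by (simp add: mult_ac)
  then have "(1 - z) * col_moment \<mu> k a b = 0"
    unfolding col_moment_def by (simp add: algebra_simps)
  moreover have "z \<noteq> 1"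
  proof -
    have "occurrences x c \<le> 3" for c :: "'n \<times> 'n \<times> 'n"
      by (cases c) auto
    then show ?thesis
      unfolding z_def using assms(2) by (intro imag_unit_pow_neq) auto
  qed
  ultimately show ?thesis
    by simp
qed

lemma col_moment_eq_0_unless_rearrangement:
  fixes \<mu> :: "(complex^'n::finite^'n) measure"
  assumes "haar_measure \<mu>" "\<not> rearrangement a b"
  shows "col_moment \<mu> k a b = 0"
  using assms rearrangement_if_same_occurrences col_moment_eq_0_if_occurrences_differ by metis

definition swap_mat :: "'n::finite \<Rightarrow> 'n \<Rightarrow> complex^'n^'n" where
  "swap_mat x y = (\<chi> i j. of_bool (j = Transposition.transpose x y i))"

lemma swap_mat_mult: "(swap_mat x y ** U)$i$k = U$(Transposition.transpose x y i)$k"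
  unfolding matrix_matrix_mult_def swap_mat_def
  by (simp add: of_bool_def if_distrib[where f = "\<lambda>z. z * _"] cong: if_cong)

lemma swap_mat_unitary: "unitary_mat (swap_mat x y)"
proof -
  have "cadj (swap_mat x y) = swap_mat x y"
    by (auto simp: vec_eq_iff cadj_def swap_mat_def transpose_eq_iff)
  moreover have "swap_mat x y ** swap_mat x y = mat 1"
    by (simp add: vec_eq_iff swap_mat_mult) (simp add: swap_mat_def mat_def)
  ultimately show ?thesis
    unfolding unitary_mat_def by simp
qed

fun map_triple :: "('a \<Rightarrow> 'b) \<Rightarrow> 'a \<times> 'a \<times> 'a \<Rightarrow> 'b \<times> 'b \<times> 'b" where
  "map_triple f (a1, a2, a3) = (f a1, f a2, f a3)"

lemma col_moment_transpose:
  fixes \<mu> :: "(complex^'n::finite^'n) measure"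
  assumes "haar_measure \<mu>"
  shows "col_moment \<mu> k a b =
    col_moment \<mu> k (map_triple (Transposition.transpose x y) a) (map_triple (Transposition.transpose x y) b)"
  by (cases a, cases b, subst col_moment_invariant[OF assms swap_mat_unitary[of x y]])
     (simp add: swap_mat_mult col_moment_def)

definition rot_mat :: "'n::finite \<Rightarrow> 'n \<Rightarrow> complex^'n^'n" where
  "rot_mat x y = (\<chi> i j.
     if i = x then (if j = x then 3/5 else if j = y then -4/5 else 0)
     else if i = y then (if j = x then 4/5 else if j = y then 3/5 else 0)
     else of_bool (i = j))"

lemma sum_UNIV_split_pair:
  "x \<noteq> y \<Longrightarrow> sum f (UNIV :: 'n::finite set) = f x + f y + sum f (UNIV - {x, y})"
  by (subst sum.subset_diff[of "{x, y}"]) (auto simp: ac_simps)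

lemma rot_mat_mult:
  "x \<noteq> y \<Longrightarrow> (rot_mat x y ** U)$i$k =
     (if i = x then 3/5 * U$x$k - 4/5 * U$y$k
      else if i = y then 4/5 * U$x$k + 3/5 * U$y$k else U$i$k)"
  unfolding matrix_matrix_mult_def rot_mat_def
  by (auto simp: sum_UNIV_split_pair[of x y] if_distrib[where f = "\<lambda>z. z * _"] cong: if_cong sum.cong_simp)

lemma rot_mat_unitary: "x \<noteq> y \<Longrightarrow> unitary_mat (rot_mat x y)"
  unfolding unitary_mat_def
  by (auto simp: vec_eq_iff matrix_matrix_mult_def cadj_def rot_mat_def mat_def sum_UNIV_split_pair[of x y]
      if_distrib[where f = "\<lambda>z. z * _"] if_distrib[where f = cnj] if_distrib[where f = "\<lambda>z. _ * z"]
      cong: if_cong sum.cong_simp)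
     (auto intro!: sum.neutral split: if_splits)

lemma col_moment_rearrangement:
  "rearrangement a a' \<Longrightarrow> rearrangement b b' \<Longrightarrow> col_moment \<mu> k a b = col_moment \<mu> k a' b'"
  unfolding col_moment_def by (simp add: colprod_rearrangement)

lemma col_moment_xxx:
  fixes \<mu> :: "(complex^'n::finite^'n) measure"
  assumes h: "haar_measure \<mu>" and xy: "x \<noteq> y"
  shows "col_moment \<mu> k (x, x, x) (x, x, x) = 3 * col_moment \<mu> k (x, x, y) (x, x, y)"
proof -
  \<comment> \<open>rotate by the angle with cosine \<open>3/5\<close> in the \<open>(x, y)\<close>-plane; the phase invariance kills all cross terms\<close>
  define t :: "nat \<Rightarrow> 'n \<times> 'n \<times> 'n" where
    "t = (\<lambda>j. if j = 3 then (x, x, x) else if j = 2 then (x, x, y) else if j = 1 then (x, y, y) else (y, y, y))"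
  define c :: "nat \<Rightarrow> complex" where
    "c = (\<lambda>j. if j = 3 then 27/125 else if j = 2 then -108/125 else if j = 1 then 144/125 else -64/125)"
  have "colprod (rot_mat x y ** U) k (x, x, x) = (\<Sum>j\<in>{0, 1, 2, 3}. c j * colprod U k (t j))" for U
    using xy by (simp add: rot_mat_mult t_def c_def algebra_simps power2_eq_square power3_eq_cube)
  then have "col_moment \<mu> k (x, x, x) (x, x, x) = (\<integral>U. (\<Sum>j\<in>{0, 1, 2, 3}. c j * colprod U k (t j))
      * cnj (\<Sum>l\<in>{0, 1, 2, 3}. c l * colprod U k (t l)) \<partial>\<mu>)"
    by (subst col_moment_invariant[OF h rot_mat_unitary[OF xy]]) simp
  also have "\<dots> = (\<Sum>j\<in>{0, 1, 2, 3}. \<Sum>l\<in>{0, 1, 2, 3}. c j * cnj (c l) * col_moment \<mu> k (t j) (t l))"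
    by (rule col_moment_sesquilinear[OF h]) simp
  also have "\<dots> = (27/125)\<^sup>2 * col_moment \<mu> k (x, x, x) (x, x, x) + (108/125)\<^sup>2 * col_moment \<mu> k (x, x, y) (x, x, y)
      + (144/125)\<^sup>2 * col_moment \<mu> k (x, y, y) (x, y, y) + (64/125)\<^sup>2 * col_moment \<mu> k (y, y, y) (y, y, y)"
    using xy by (simp add: t_def c_def col_moment_eq_0_if_occurrences_differ[OF h, of x] power2_eq_square)
  also have "col_moment \<mu> k (y, y, y) (y, y, y) = col_moment \<mu> k (x, x, x) (x, x, x)"
    using col_moment_transpose[OF h, of k "(y, y, y)" "(y, y, y)" x y] by simp
  also have "col_moment \<mu> k (x, y, y) (x, y, y) = col_moment \<mu> k (y, x, x) (y, x, x)"
    using col_moment_transpose[OF h, of k "(x, y, y)" "(x, y, y)" x y] xy by simp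
  also have "\<dots> = col_moment \<mu> k (x, x, y) (x, x, y)"
    by (rule col_moment_rearrangement) (simp_all add: rearrangement_def)
  finally show ?thesis
    by (simp add: field_simps)
qed

lemma col_moment_xxz:
  fixes \<mu> :: "(complex^'n::finite^'n) measure"
  assumes h: "haar_measure \<mu>" and xyz: "x \<noteq> y" "x \<noteq> z" "y \<noteq> z"
  shows "col_moment \<mu> k (x, x, z) (x, x, z) = 2 * col_moment \<mu> k (x, y, z) (x, y, z)"
proof -
  define t :: "nat \<Rightarrow> 'n \<times> 'n \<times> 'n" where
    "t = (\<lambda>j. if j = 2 then (x, x, z) else if j = 1 then (x, y, z) else (y, y, z))"
  define c :: "nat \<Rightarrow> complex" where
    "c = (\<lambda>j. if j = 2 then 9/25 else if j = 1 then -24/25 else 16/25)"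
  have "colprod (rot_mat x y ** U) k (x, x, z) = (\<Sum>j\<in>{0, 1, 2}. c j * colprod U k (t j))" for U
    using xyz by (simp add: rot_mat_mult t_def c_def algebra_simps power2_eq_square)
  then have "col_moment \<mu> k (x, x, z) (x, x, z) = (\<integral>U. (\<Sum>j\<in>{0, 1, 2}. c j * colprod U k (t j))
      * cnj (\<Sum>l\<in>{0, 1, 2}. c l * colprod U k (t l)) \<partial>\<mu>)"
    by (subst col_moment_invariant[OF h rot_mat_unitary[OF xyz(1)]]) simp
  also have "\<dots> = (\<Sum>j\<in>{0, 1, 2}. \<Sum>l\<in>{0, 1, 2}. c j * cnj (c l) * col_moment \<mu> k (t j) (t l))"
    by (rule col_moment_sesquilinear[OF h]) simp
  also have "\<dots> = (9/25)\<^sup>2 * col_moment \<mu> k (x, x, z) (x, x, z) + (24/25)\<^sup>2 * col_moment \<mu> k (x, y, z) (x, y, z)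
      + (16/25)\<^sup>2 * col_moment \<mu> k (y, y, z) (y, y, z)"
    using xyz by (simp add: t_def c_def col_moment_eq_0_if_occurrences_differ[OF h, of x] power2_eq_square)
  also have "col_moment \<mu> k (y, y, z) (y, y, z) = col_moment \<mu> k (x, x, z) (x, x, z)"
    using col_moment_transpose[OF h, of k "(y, y, z)" "(y, y, z)" x y] xyz by simp
  finally show ?thesis
    by (simp add: field_simps)
qed

lemma perm_count_diag:
  "perm_count (a1, a2, a3) (a1, a2, a3) =
     1 + of_bool (a1 = a2) + of_bool (a1 = a3) + of_bool (a2 = a3) + 2 * of_bool (a1 = a2) * of_bool (a2 = a3)"
  unfolding perm_count_def by (cases "a1 = a2"; cases "a2 = a3"; cases "a1 = a3") auto

lemma col_moment_diag:
  fixes \<mu> :: "(complex^'n::finite^'n) measure"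
  assumes h: "haar_measure \<mu>"
  shows "col_moment \<mu> k b b = col_moment \<mu> k (x, x, x) (x, x, x) / 6 * perm_count b b"
proof -
  define A where "A = col_moment \<mu> k (x, x, x) (x, x, x)"
  have triple: "col_moment \<mu> k (u, u, u) (u, u, u) = A" for u
    using col_moment_transpose[OF h, of k "(u, u, u)" "(u, u, u)" u x] by (simp add: A_def)
  have double: "col_moment \<mu> k (u, u, v) (u, u, v) = A / 3" if "u \<noteq> v" for u v
    using col_moment_xxx[OF h that, of k] triple[of u] by simp
  have single: "col_moment \<mu> k (u, v, w) (u, v, w) = A / 6" if "u \<noteq> v" "u \<noteq> w" "v \<noteq> w" for u v w
    using col_moment_xxz[OF h that, of k] double[of u w] that by simp
  obtain u v w where b: "b = (u, v, w)"
    by (cases b)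
  have "col_moment \<mu> k (u, v, w) (u, v, w) = A / 6 * perm_count (u, v, w) (u, v, w)"
  proof (cases "u = v")
    case True
    then show ?thesis
      by (cases "v = w") (simp_all add: perm_count_diag triple double)
  next
    case False
    have "col_moment \<mu> k (u, v, u) (u, v, u) = col_moment \<mu> k (u, u, v) (u, u, v)"
      "col_moment \<mu> k (u, v, v) (u, v, v) = col_moment \<mu> k (v, v, u) (v, v, u)"
      by (rule col_moment_rearrangement; simp add: rearrangement_def)+
    with False show ?thesis
      by (cases "u = w"; cases "v = w") (simp_all add: perm_count_diag double single)
  qed
  then show ?thesis
    by (simp add: A_def b)
qed

lemma perm_count_rearrangement:
  assumes "rearrangement a b"
  shows "perm_count a b = perm_count b b"
proof -
  obtain x y z where b: "b = (x, y, z)"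
    by (cases b)
  show ?thesis
    using assms unfolding b rearrangement_def perm_count_def
    by (elim disjE; cases "x = y"; cases "y = z"; cases "x = z") simp_all
qed

lemma perm_count_eq_0: "\<not> rearrangement a b \<Longrightarrow> perm_count a b = 0"
  by (simp add: rearrangement_def perm_count_def)

lemma col_moment_perm_count:
  fixes \<mu> :: "(complex^'n::finite^'n) measure"
  assumes h: "haar_measure \<mu>"
  shows "col_moment \<mu> k a b = col_moment \<mu> k (x, x, x) (x, x, x) / 6 * perm_count a b"
proof (cases "rearrangement a b")
  case True
  then have "col_moment \<mu> k a b = col_moment \<mu> k b b"
    by (simp add: col_moment_def colprod_rearrangement)
  also have "\<dots> = col_moment \<mu> k (x, x, x) (x, x, x) / 6 * perm_count b b"
    by (rule col_moment_diag[OF h])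
  also have "perm_count b b = perm_count a b"
    using perm_count_rearrangement[OF True] by simp
  finally show ?thesis .
next
  case False
  then show ?thesis
    by (simp add: col_moment_eq_0_unless_rearrangement[OF h] perm_count_eq_0)
qed

lemma sum_UNIV_pairs:
  "(\<Sum>x\<in>UNIV. f x) = (\<Sum>a\<in>UNIV. \<Sum>b\<in>UNIV. f (a, b))"
  for f :: "'a::finite \<times> 'b::finite \<Rightarrow> 'c::comm_monoid_add"
  by (simp add: UNIV_Times_UNIV[symmetric] sum.cartesian_product del: UNIV_Times_UNIV)

lemma sum_UNIV_triples:
  "(\<Sum>a\<in>UNIV. g a) = (\<Sum>a1\<in>UNIV. \<Sum>a2\<in>UNIV. \<Sum>a3\<in>UNIV. g (a1, a2, a3))"
  for g :: "'a::finite \<times> 'b::finite \<times> 'c::finite \<Rightarrow> 'd::comm_monoid_add"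
  by (simp add: sum_UNIV_pairs)

lemma sum_perm_count_diag:
  "(\<Sum>b\<in>UNIV. perm_count b (b :: 'n::finite \<times> 'n \<times> 'n)) =
     of_nat CARD('n) * (of_nat CARD('n) + 1) * (of_nat CARD('n) + 2)"
  unfolding sum_UNIV_triples perm_count_diag
  by (simp add: sum.distrib of_bool_def sum_distrib_left[symmetric] algebra_simps)

lemma sum_col_moment_diag:
  fixes \<mu> :: "(complex^'n::finite^'n) measure"
  assumes h: "haar_measure \<mu>"
  shows "(\<Sum>b\<in>UNIV. col_moment \<mu> k b b) = 1"
proof -
  have "(\<Sum>b\<in>UNIV. col_moment \<mu> k b b) = (\<integral>U. (\<Sum>b\<in>UNIV. colprod U k b * cnj (colprod U k b)) \<partial>\<mu>)"
    unfolding col_moment_def by (simp add: colprod_moment_integrable[OF h])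
  also have "\<dots> = (\<integral>U. 1 \<partial>\<mu>)"
  proof (rule integral_cong_AE)
    show "AE U in \<mu>. (\<Sum>b\<in>UNIV. colprod U k b * cnj (colprod U k b)) = 1"
      using haar_measureD(3)[OF h]
    proof eventually_elim
      case (elim U)
      have "(\<Sum>b\<in>UNIV. colprod U k b * cnj (colprod U k b)) = (\<Sum>i\<in>UNIV. cnj (U$i$k) * U$i$k) ^ 3"
        unfolding sum_UNIV_triples power3_eq_cube sum_product
        by (simp add: sum_distrib_left sum_distrib_right mult_ac)
      then show ?case
        using unitary_cols_orthonormal[OF elim, of k k] by simp
    qed
  qed (auto intro!: haar_measurable[OF h] borel_measurable_continuous_onI continuous_intros)
  also have "\<dots> = 1"
    using prob_space.prob_space[OF haar_measureD(1)[OF h]] by simp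
  finally show ?thesis .
qed

lemma of_nat_card_ne_0:
  "(of_nat CARD('n::finite) :: 'a::semiring_char_0) \<noteq> 0"
  "(of_nat CARD('n) :: 'a) + 1 \<noteq> 0"
  "(of_nat CARD('n) :: 'a) + 2 \<noteq> 0"
proof -
  show "(of_nat CARD('n) :: 'a) \<noteq> 0"
    by simp
  show "(of_nat CARD('n) :: 'a) + 1 \<noteq> 0"
    using of_nat_neq_0[where 'a = 'a, of "CARD('n)"] by (simp add: add.commute)
  show "(of_nat CARD('n) :: 'a) + 2 \<noteq> 0"
    by (metis of_nat_add of_nat_numeral of_nat_eq_0_iff add_is_0 zero_neq_numeral)
qed

lemma col_moment_formula:
  fixes \<mu> :: "(complex^'n::finite^'n) measure"
  assumes h: "haar_measure \<mu>"
  defines "d \<equiv> of_nat CARD('n) :: complex"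
  shows "col_moment \<mu> k a b = perm_count a b / (d * (d + 1) * (d + 2))"
proof -
  obtain x :: 'n where True by blast
  define \<kappa> where "\<kappa> = col_moment \<mu> k (x, x, x) (x, x, x) / 6"
  have "1 = (\<Sum>b\<in>UNIV. col_moment \<mu> k b b)"
    using sum_col_moment_diag[OF h] by simp
  also have "\<dots> = (\<Sum>b\<in>UNIV. \<kappa> * perm_count b (b :: 'n \<times> 'n \<times> 'n))"
    unfolding \<kappa>_def by (intro sum.cong refl col_moment_perm_count[OF h])
  also have "\<dots> = \<kappa> * (d * (d + 1) * (d + 2))"
    by (simp add: sum_distrib_left[symmetric] sum_perm_count_diag d_def)
  finally have "\<kappa> * (d * (d + 1) * (d + 2)) = 1" ..
  moreover have "d * (d + 1) * (d + 2) \<noteq> 0"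
    by (simp add: d_def of_nat_card_ne_0)
  ultimately have "\<kappa> = 1 / (d * (d + 1) * (d + 2))"
    by (simp add: field_simps)
  then show ?thesis
    using col_moment_perm_count[OF h, of k a b x] by (simp add: \<kappa>_def)
qed

section \<open>The twirl of \<open>O\<^sub>+\<^sup>2\<close>\<close>

lemma O_plus_sq_entry:
  "mmul O_plus O_plus c e = of_bool (c = e) * (1 + (- of_nat CARD('n)) ^ (wt c - 1))\<^sup>2"
  for c e :: "'n::finite \<times> 'n \<times> 'n"
  unfolding mmul_def O_plus_def
  by (simp add: if_distrib[where f = "\<lambda>z. z * _"] if_distrib[where f = "\<lambda>z. _ * z"] power2_eq_square
      cong: if_cong)

lemma O_plus_sq_weight:
  fixes d :: complex
  shows "(1 + (- d) ^ (wt (c1, c2, c3) - 1))\<^sup>2 =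
    4 + ((1 - d)\<^sup>2 - 4) * (of_bool (c1 = c2) + of_bool (c1 = c3) + of_bool (c2 = c3))
      + ((1 + d\<^sup>2)\<^sup>2 - 3 * (1 - d)\<^sup>2 + 8) * of_bool (c1 = c2) * of_bool (c2 = c3)"
  unfolding wt_def
  by (cases "c1 = c2"; cases "c2 = c3"; cases "c1 = c3") (simp_all add: algebra_simps power2_eq_square)

lemma sum_product_triple:
  "(\<Sum>i\<in>A. \<Sum>j\<in>B. \<Sum>k\<in>C. f i * g j * h k) = sum f A * sum g B * (sum h C :: 'a::comm_semiring_0)"
  by (simp add: sum_distrib_left[symmetric] sum_distrib_right[symmetric] mult.assoc)

lemma sum_U3_cnj_U3:
  assumes "unitary_mat U"
  shows "(\<Sum>c\<in>UNIV. U3 U a c * cnj (U3 U b c)) = of_bool (a = b)"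
proof -
  obtain a1 a2 a3 b1 b2 b3 where ab: "a = (a1, a2, a3)" "b = (b1, b2, b3)"
    by (cases a, cases b)
  have "(\<Sum>c\<in>UNIV. U3 U a c * cnj (U3 U b c)) = (\<Sum>c1\<in>UNIV. \<Sum>c2\<in>UNIV. \<Sum>c3\<in>UNIV.
      (U$a1$c1 * cnj (U$b1$c1)) * (U$a2$c2 * cnj (U$b2$c2)) * (U$a3$c3 * cnj (U$b3$c3)))"
    unfolding sum_UNIV_triples ab U3_def by (simp add: mult_ac)
  also have "\<dots> = (\<Sum>c1\<in>UNIV. U$a1$c1 * cnj (U$b1$c1)) * (\<Sum>c2\<in>UNIV. U$a2$c2 * cnj (U$b2$c2))
        * (\<Sum>c3\<in>UNIV. U$a3$c3 * cnj (U$b3$c3))"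
    by (rule sum_product_triple)
  finally show ?thesis
    unfolding unitary_rows_orthonormal[OF assms] ab by simp
qed

lemma sum_U3_cnj_U3_diag12:
  assumes "unitary_mat U"
  shows "(\<Sum>c1\<in>UNIV. \<Sum>c3\<in>UNIV. U3 U (a1, a2, a3) (c1, c1, c3) * cnj (U3 U (b1, b2, b3) (c1, c1, c3)))
    = of_bool (a3 = b3) * (\<Sum>k\<in>UNIV. \<Sum>i\<in>UNIV. colprod U k (a1, a2, i) * cnj (colprod U k (b1, b2, i)))"
proof -
  have col: "U$a1$k * U$a2$k * cnj (U$b1$k * U$b2$k)
      = (\<Sum>i\<in>UNIV. colprod U k (a1, a2, i) * cnj (colprod U k (b1, b2, i)))" for k
  proof -
    \<comment> \<open>inserting \<open>\<Sum>i. |U$i$k|\<^sup>2 = 1\<close> turns second moments of a column into third moments\<close>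
    have "U$a1$k * U$a2$k * cnj (U$b1$k * U$b2$k)
        = U$a1$k * U$a2$k * cnj (U$b1$k * U$b2$k) * (\<Sum>i\<in>UNIV. cnj (U$i$k) * U$i$k)"
      using unitary_cols_orthonormal[OF assms, of k k] by simp
    also have "\<dots> = (\<Sum>i\<in>UNIV. colprod U k (a1, a2, i) * cnj (colprod U k (b1, b2, i)))"
      by (simp add: sum_distrib_left mult_ac)
    finally show ?thesis .
  qed
  have "(\<Sum>c1\<in>UNIV. \<Sum>c3\<in>UNIV. U3 U (a1, a2, a3) (c1, c1, c3) * cnj (U3 U (b1, b2, b3) (c1, c1, c3)))
      = (\<Sum>k\<in>UNIV. \<Sum>c3\<in>UNIV. (U$a1$k * U$a2$k * cnj (U$b1$k * U$b2$k)) * (U$a3$c3 * cnj (U$b3$c3)))"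
    unfolding U3_def by (simp add: mult_ac)
  also have "\<dots> = (\<Sum>k\<in>UNIV. U$a1$k * U$a2$k * cnj (U$b1$k * U$b2$k)) * (\<Sum>c3\<in>UNIV. U$a3$c3 * cnj (U$b3$c3))"
    by (simp only: sum_product)
  finally show ?thesis
    unfolding col unitary_rows_orthonormal[OF assms] by (simp add: mult.commute)
qed

lemma sum_triples_coincidence_weighted:
  fixes P :: "'n::finite \<times> 'n \<times> 'n \<Rightarrow> 'a::comm_ring_1"
  shows "(\<Sum>c1\<in>UNIV. \<Sum>c2\<in>UNIV. \<Sum>c3\<in>UNIV.
      (p + q * (of_bool (c1 = c2) + of_bool (c1 = c3) + of_bool (c2 = c3)) + r * of_bool (c1 = c2) * of_bool (c2 = c3))
        * P (c1, c2, c3)) =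
    p * (\<Sum>c\<in>UNIV. P c)
    + q * ((\<Sum>c1\<in>UNIV. \<Sum>c3\<in>UNIV. P (c1, c1, c3)) + (\<Sum>c1\<in>UNIV. \<Sum>c2\<in>UNIV. P (c1, c2, c1))
      + (\<Sum>c1\<in>UNIV. \<Sum>c2\<in>UNIV. P (c1, c2, c2)))
    + r * (\<Sum>c1\<in>UNIV. P (c1, c1, c1))"
proof -
  have "(\<Sum>c1\<in>UNIV. \<Sum>c2\<in>UNIV. \<Sum>c3\<in>UNIV. of_bool (c1 = c2) * P (c1, c2, c3))
      = (\<Sum>c1\<in>UNIV. \<Sum>c3\<in>UNIV. P (c1, c1, c3))"
    by (simp only: sum_distrib_left[symmetric])
       (simp add: of_bool_def if_distrib[where f = "\<lambda>z. z * _"] cong: if_cong)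
  moreover have "(\<Sum>c1\<in>UNIV. \<Sum>c2\<in>UNIV. \<Sum>c3\<in>UNIV. of_bool (c1 = c3) * P (c1, c2, c3))
      = (\<Sum>c1\<in>UNIV. \<Sum>c2\<in>UNIV. P (c1, c2, c1))"
    by (simp add: of_bool_def if_distrib[where f = "\<lambda>z. z * _"] cong: if_cong)
  moreover have "(\<Sum>c1\<in>UNIV. \<Sum>c2\<in>UNIV. \<Sum>c3\<in>UNIV. of_bool (c2 = c3) * P (c1, c2, c3))
      = (\<Sum>c1\<in>UNIV. \<Sum>c2\<in>UNIV. P (c1, c2, c2))"
    by (simp add: of_bool_def if_distrib[where f = "\<lambda>z. z * _"] cong: if_cong)
  moreover have "(\<Sum>c1\<in>UNIV. \<Sum>c2\<in>UNIV. \<Sum>c3\<in>UNIV. of_bool (c1 = c2) * of_bool (c2 = c3) * P (c1, c2, c3))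
      = (\<Sum>c1\<in>UNIV. P (c1, c1, c1))"
    by (simp add: of_bool_def if_distrib[where f = "\<lambda>z. z * _"] sum.If_cases cong: if_cong)
  ultimately show ?thesis
    unfolding sum_UNIV_triples[of P]
    by (simp add: distrib_left distrib_right sum.distrib sum_distrib_left[symmetric] mult.assoc)
qed

definition colprod_pair_sum :: "complex^'n::finite^'n \<Rightarrow> 'n \<Rightarrow> 'n \<Rightarrow> 'n \<Rightarrow> 'n \<Rightarrow> complex" where
  "colprod_pair_sum U a1 a2 b1 b2 =
     (\<Sum>k\<in>UNIV. \<Sum>i\<in>UNIV. colprod U k (a1, a2, i) * cnj (colprod U k (b1, b2, i)))"

lemma O_plus_sq_twirl_integrand:
  fixes U :: "complex^'n::finite^'n"
  assumes U: "unitary_mat U"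
  defines "d \<equiv> of_nat CARD('n) :: complex"
  shows "(\<Sum>c\<in>UNIV. \<Sum>e\<in>UNIV. U3 U (a1, a2, a3) c * mmul O_plus O_plus c e * cnj (U3 U (b1, b2, b3) e)) =
    4 * of_bool ((a1, a2, a3) = (b1, b2, b3))
    + ((1 - d)\<^sup>2 - 4) * (of_bool (a3 = b3) * colprod_pair_sum U a1 a2 b1 b2
        + of_bool (a2 = b2) * colprod_pair_sum U a1 a3 b1 b3 + of_bool (a1 = b1) * colprod_pair_sum U a2 a3 b2 b3)
    + ((1 + d\<^sup>2)\<^sup>2 - 3 * (1 - d)\<^sup>2 + 8) * (\<Sum>k\<in>UNIV. colprod U k (a1, a2, a3) * cnj (colprod U k (b1, b2, b3)))"
    (is "?lhs = ?rhs")
proof -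
  define P where "P c = U3 U (a1, a2, a3) c * cnj (U3 U (b1, b2, b3) c)" for c
  have "?lhs = (\<Sum>c\<in>UNIV. (1 + (- d) ^ (wt c - 1))\<^sup>2 * P c)"
    unfolding O_plus_sq_entry d_def P_def
    by (simp add: of_bool_def if_distrib[where f = "\<lambda>z. z * _"] if_distrib[where f = "\<lambda>z. _ * z"] mult_ac
        cong: if_cong)
  also have "\<dots> = 4 * (\<Sum>c\<in>UNIV. P c)
      + ((1 - d)\<^sup>2 - 4) * ((\<Sum>c1\<in>UNIV. \<Sum>c3\<in>UNIV. P (c1, c1, c3)) + (\<Sum>c1\<in>UNIV. \<Sum>c2\<in>UNIV. P (c1, c2, c1))
          + (\<Sum>c1\<in>UNIV. \<Sum>c2\<in>UNIV. P (c1, c2, c2)))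
      + ((1 + d\<^sup>2)\<^sup>2 - 3 * (1 - d)\<^sup>2 + 8) * (\<Sum>c1\<in>UNIV. P (c1, c1, c1))"
    unfolding sum_UNIV_triples[of "\<lambda>c. _ c * P c"] O_plus_sq_weight
    by (rule sum_triples_coincidence_weighted)
  also have "(\<Sum>c\<in>UNIV. P c) = of_bool ((a1, a2, a3) = (b1, b2, b3))"
    unfolding P_def by (rule sum_U3_cnj_U3[OF U])
  also have "(\<Sum>c1\<in>UNIV. \<Sum>c3\<in>UNIV. P (c1, c1, c3)) = of_bool (a3 = b3) * colprod_pair_sum U a1 a2 b1 b2"
    unfolding P_def colprod_pair_sum_def by (rule sum_U3_cnj_U3_diag12[OF U])
  also have "(\<Sum>c1\<in>UNIV. \<Sum>c2\<in>UNIV. P (c1, c2, c1)) = of_bool (a2 = b2) * colprod_pair_sum U a1 a3 b1 b3"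
    unfolding colprod_pair_sum_def sum_U3_cnj_U3_diag12[OF U, symmetric] P_def U3_def by (simp add: mult_ac)
  also have "(\<Sum>c1\<in>UNIV. \<Sum>c2\<in>UNIV. P (c1, c2, c2)) = of_bool (a1 = b1) * colprod_pair_sum U a2 a3 b2 b3"
    unfolding colprod_pair_sum_def sum_U3_cnj_U3_diag12[OF U, symmetric] P_def U3_def
    by (subst sum.swap) (simp add: mult_ac)
  also have "(\<Sum>c1\<in>UNIV. P (c1, c1, c1)) = (\<Sum>k\<in>UNIV. colprod U k (a1, a2, a3) * cnj (colprod U k (b1, b2, b3)))"
    unfolding P_def U3_def by simp
  finally show ?thesis .
qed

lemma sum_perm_count_last:
  "(\<Sum>i\<in>UNIV. perm_count (x1, x2, i) (y1, y2, i)) =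
     (of_nat CARD('n) + 2) * (of_bool (x1 = y1 \<and> x2 = y2) + of_bool (x1 = y2 \<and> x2 = y1))"
  for x1 :: "'n::finite"
  unfolding perm_count_def by (simp add: sum.distrib of_bool_def algebra_simps conj_commute cong: conj_cong)

lemma has_bochner_integral_colprod_moment:
  fixes \<mu> :: "(complex^'n::finite^'n) measure"
  assumes "haar_measure \<mu>"
  shows "has_bochner_integral \<mu> (\<lambda>U. colprod U k a * cnj (colprod U k b)) (col_moment \<mu> k a b)"
  using colprod_moment_integrable[OF assms] by (simp add: has_bochner_integral_iff col_moment_def)

lemma has_bochner_integral_colprod_pair_sum:
  fixes \<mu> :: "(complex^'n::finite^'n) measure"
  assumes h: "haar_measure \<mu>"
  defines "d \<equiv> of_nat CARD('n) :: complex"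
  shows "has_bochner_integral \<mu> (\<lambda>U. colprod_pair_sum U a1 a2 b1 b2)
    ((of_bool (a1 = b1 \<and> a2 = b2) + of_bool (a1 = b2 \<and> a2 = b1)) / (d + 1))"
proof -
  have "has_bochner_integral \<mu> (\<lambda>U. colprod_pair_sum U a1 a2 b1 b2)
      (\<Sum>k\<in>UNIV. \<Sum>i\<in>UNIV. col_moment \<mu> k (a1, a2, i) (b1, b2, i))"
    unfolding colprod_pair_sum_def by (intro has_bochner_integral_sum has_bochner_integral_colprod_moment[OF h])
  also have "(\<Sum>k\<in>UNIV. \<Sum>i\<in>UNIV. col_moment \<mu> k (a1, a2, i) (b1, b2, i)) =
      (d * (d + 2)) * (of_bool (a1 = b1 \<and> a2 = b2) + of_bool (a1 = b2 \<and> a2 = b1)) / ((d * (d + 2)) * (d + 1))"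
    unfolding col_moment_formula[OF h] sum_divide_distrib[symmetric] sum_perm_count_last d_def
    by (simp add: ac_simps)
  also have "\<dots> = (of_bool (a1 = b1 \<and> a2 = b2) + of_bool (a1 = b2 \<and> a2 = b1)) / (d + 1)"
    by (rule mult_divide_mult_cancel_left) (simp add: d_def of_nat_card_ne_0)
  finally show ?thesis .
qed

lemma has_bochner_integral_colprod_diag_sum:
  fixes \<mu> :: "(complex^'n::finite^'n) measure"
  assumes h: "haar_measure \<mu>"
  defines "d \<equiv> of_nat CARD('n) :: complex"
  shows "has_bochner_integral \<mu> (\<lambda>U. \<Sum>k\<in>UNIV. colprod U k a * cnj (colprod U k b))
    (perm_count a b / ((d + 1) * (d + 2)))"
proof -
  have "has_bochner_integral \<mu> (\<lambda>U. \<Sum>k\<in>UNIV. colprod U k a * cnj (colprod U k b))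
      (\<Sum>k\<in>UNIV. col_moment \<mu> k a b)"
    by (intro has_bochner_integral_sum has_bochner_integral_colprod_moment[OF h])
  also have "(\<Sum>k\<in>UNIV. col_moment \<mu> k a b) = d * perm_count a b / (d * ((d + 1) * (d + 2)))"
    unfolding col_moment_formula[OF h] d_def by (simp add: ac_simps)
  also have "\<dots> = perm_count a b / ((d + 1) * (d + 2))"
    by (rule mult_divide_mult_cancel_left) (simp add: d_def)
  finally show ?thesis .
qed

definition perm_op :: "('a \<Rightarrow> 'a) \<Rightarrow> 'a op" where
  "perm_op f = (\<lambda>a a'. of_bool (a = f a'))"

definition perm_comb :: "complex \<Rightarrow> complex \<Rightarrow> complex \<Rightarrow> ('n \<times> 'n \<times> 'n) op" where
  "perm_comb \<alpha> \<beta> \<gamma> = (\<lambda>a a'. \<alpha> * perm_op id a a'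
      + \<beta> * (perm_op swap12 a a' + perm_op swap13 a a' + perm_op swap23 a a')
      + \<gamma> * (perm_op rotl a a' + perm_op rotr a a'))"

lemma perm_op_id: "perm_op id a b = of_bool (a = b)"
  by (simp add: perm_op_def)

lemma perm_count_eq_sum_perm_op:
  "perm_count a b = perm_op id a b + perm_op swap12 a b + perm_op swap13 a b + perm_op swap23 a b
     + perm_op rotl a b + perm_op rotr a b"
  by (simp add: perm_count_def perm_op_def)

lemma pair_coincidences_eq_perm_ops:
  "of_bool (a3 = b3) * (of_bool (a1 = b1 \<and> a2 = b2) + of_bool (a1 = b2 \<and> a2 = b1))
   + of_bool (a2 = b2) * (of_bool (a1 = b1 \<and> a3 = b3) + of_bool (a1 = b3 \<and> a3 = b1))
   + of_bool (a1 = b1) * (of_bool (a2 = b2 \<and> a3 = b3) + of_bool (a2 = b3 \<and> a3 = b2)) =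
   3 * perm_op id (a1, a2, a3) (b1, b2, b3) + perm_op swap12 (a1, a2, a3) (b1, b2, b3)
   + perm_op swap13 (a1, a2, a3) (b1, b2, b3) + perm_op swap23 (a1, a2, a3) (b1, b2, b3)"
  unfolding perm_op_def by (cases "a1 = b1"; cases "a2 = b2"; cases "a3 = b3") auto

lemma twirl3_O_plus_sq_entry:
  fixes \<mu> :: "(complex^'n::finite^'n) measure"
  assumes h: "haar_measure \<mu>"
  defines "d \<equiv> of_nat CARD('n) :: complex"
  shows "twirl3 \<mu> (mmul O_plus O_plus) (a1, a2, a3) (b1, b2, b3) =
    4 * of_bool ((a1, a2, a3) = (b1, b2, b3))
    + ((1 - d)\<^sup>2 - 4) * ((3 * perm_op id (a1, a2, a3) (b1, b2, b3) + perm_op swap12 (a1, a2, a3) (b1, b2, b3)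
        + perm_op swap13 (a1, a2, a3) (b1, b2, b3) + perm_op swap23 (a1, a2, a3) (b1, b2, b3)) / (d + 1))
    + ((1 + d\<^sup>2)\<^sup>2 - 3 * (1 - d)\<^sup>2 + 8) * (perm_count (a1, a2, a3) (b1, b2, b3) / ((d + 1) * (d + 2)))"
proof -
  interpret prob_space \<mu>
    by (rule haar_measureD(1)[OF h])
  define I where "I U = 4 * of_bool ((a1, a2, a3) = (b1, b2, b3))
      + ((1 - d)\<^sup>2 - 4) * (of_bool (a3 = b3) * colprod_pair_sum U a1 a2 b1 b2
        + of_bool (a2 = b2) * colprod_pair_sum U a1 a3 b1 b3 + of_bool (a1 = b1) * colprod_pair_sum U a2 a3 b2 b3)
      + ((1 + d\<^sup>2)\<^sup>2 - 3 * (1 - d)\<^sup>2 + 8) * (\<Sum>k\<in>UNIV. colprod U k (a1, a2, a3) * cnj (colprod U k (b1, b2, b3)))"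
    for U
  have "AE U in \<mu>.
      (\<Sum>c\<in>UNIV. \<Sum>e\<in>UNIV. U3 U (a1, a2, a3) c * mmul O_plus O_plus c e * cnj (U3 U (b1, b2, b3) e)) = I U"
    using haar_measureD(3)[OF h] unfolding I_def d_def by eventually_elim (rule O_plus_sq_twirl_integrand)
  then have "twirl3 \<mu> (mmul O_plus O_plus) (a1, a2, a3) (b1, b2, b3) = (\<integral>U. I U \<partial>\<mu>)"
    unfolding twirl3_def
    by (rule integral_cong_AE[rotated 2])
       (auto intro!: haar_measurable[OF h] borel_measurable_continuous_onI continuous_intros
         simp: I_def U3_def colprod_pair_sum_def case_prod_beta)
  also have "\<dots> = 4 * of_bool ((a1, a2, a3) = (b1, b2, b3))
    + ((1 - d)\<^sup>2 - 4) * (of_bool (a3 = b3) * ((of_bool (a1 = b1 \<and> a2 = b2) + of_bool (a1 = b2 \<and> a2 = b1)) / (d + 1))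
        + of_bool (a2 = b2) * ((of_bool (a1 = b1 \<and> a3 = b3) + of_bool (a1 = b3 \<and> a3 = b1)) / (d + 1))
        + of_bool (a1 = b1) * ((of_bool (a2 = b2 \<and> a3 = b3) + of_bool (a2 = b3 \<and> a3 = b2)) / (d + 1)))
    + ((1 + d\<^sup>2)\<^sup>2 - 3 * (1 - d)\<^sup>2 + 8) * (perm_count (a1, a2, a3) (b1, b2, b3) / ((d + 1) * (d + 2)))"
    unfolding I_def d_def
    by (intro has_bochner_integral_integral_eq has_bochner_integral_add has_bochner_integral_mult_right
        has_bochner_integral_colprod_pair_sum[OF h] has_bochner_integral_colprod_diag_sum[OF h])
       (simp add: has_bochner_integral_iff prob_space)
  also have "\<dots> = 4 * of_bool ((a1, a2, a3) = (b1, b2, b3))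
    + ((1 - d)\<^sup>2 - 4) * ((of_bool (a3 = b3) * (of_bool (a1 = b1 \<and> a2 = b2) + of_bool (a1 = b2 \<and> a2 = b1))
        + of_bool (a2 = b2) * (of_bool (a1 = b1 \<and> a3 = b3) + of_bool (a1 = b3 \<and> a3 = b1))
        + of_bool (a1 = b1) * (of_bool (a2 = b2 \<and> a3 = b3) + of_bool (a2 = b3 \<and> a3 = b2))) / (d + 1))
    + ((1 + d\<^sup>2)\<^sup>2 - 3 * (1 - d)\<^sup>2 + 8) * (perm_count (a1, a2, a3) (b1, b2, b3) / ((d + 1) * (d + 2)))"
    by (simp only: times_divide_eq_right add_divide_distrib[symmetric])
  finally show ?thesis
    unfolding pair_coincidences_eq_perm_ops .
qed

lemma O_plus_sq_twirl_coefficients: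
  fixes d :: complex
  assumes "d + 1 \<noteq> 0" "d + 2 \<noteq> 0"
  shows "((1 - d)\<^sup>2 - 4) * (x / (d + 1)) = (d - 3) * x"
    and "((1 + d\<^sup>2)\<^sup>2 - 3 * (1 - d)\<^sup>2 + 8) * (y / ((d + 1) * (d + 2))) = ((d - 1) * d\<^sup>2 + 6) / (d + 2) * y"
    and "4 + 3 * (d - 3) + ((d - 1) * d\<^sup>2 + 6) / (d + 2) = (d * (d + 1)\<^sup>2 - 4) / (d + 2)"
    and "d - 3 + ((d - 1) * d\<^sup>2 + 6) / (d + 2) = d * (d\<^sup>2 - 1) / (d + 2)"
proof -
  have "(1 - d)\<^sup>2 - 4 = (d - 3) * (d + 1)"
    by (simp add: algebra_simps power2_eq_square)
  then show "((1 - d)\<^sup>2 - 4) * (x / (d + 1)) = (d - 3) * x"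
    using assms(1) by simp
  have "(1 + d\<^sup>2)\<^sup>2 - 3 * (1 - d)\<^sup>2 + 8 = ((d - 1) * d\<^sup>2 + 6) * (d + 1)"
    by (simp add: algebra_simps power2_eq_square)
  then show "((1 + d\<^sup>2)\<^sup>2 - 3 * (1 - d)\<^sup>2 + 8) * (y / ((d + 1) * (d + 2))) = ((d - 1) * d\<^sup>2 + 6) / (d + 2) * y"
    using assms(1) by simp
  show "4 + 3 * (d - 3) + ((d - 1) * d\<^sup>2 + 6) / (d + 2) = (d * (d + 1)\<^sup>2 - 4) / (d + 2)"
    using assms(2) by (simp add: field_simps) (simp add: algebra_simps power2_eq_square)
  show "d - 3 + ((d - 1) * d\<^sup>2 + 6) / (d + 2) = d * (d\<^sup>2 - 1) / (d + 2)"
    using assms(2) by (simp add: field_simps) (simp add: algebra_simps power2_eq_square)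
qed


lemma twirl3_O_plus_sq:
  fixes \<mu> :: "(complex^'n::finite^'n) measure"
  assumes h: "haar_measure \<mu>"
  defines "d \<equiv> of_nat CARD('n) :: complex"
  shows "twirl3 \<mu> (mmul O_plus O_plus) =
    perm_comb ((d * (d + 1)\<^sup>2 - 4) / (d + 2)) (d * (d\<^sup>2 - 1) / (d + 2)) (((d - 1) * d\<^sup>2 + 6) / (d + 2))"
proof (intro ext)
  fix a b :: "'n \<times> 'n \<times> 'n"
  obtain a1 a2 a3 b1 b2 b3 where ab: "a = (a1, a2, a3)" "b = (b1, b2, b3)"
    by (cases a, cases b)
  define \<gamma> where "\<gamma> = ((d - 1) * d\<^sup>2 + 6) / (d + 2)"
  have nz: "d + 1 \<noteq> 0" "d + 2 \<noteq> 0"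
    by (simp_all add: d_def of_nat_card_ne_0)
  have "twirl3 \<mu> (mmul O_plus O_plus) a b = 4 * perm_op id a b
      + (d - 3) * (3 * perm_op id a b + perm_op swap12 a b + perm_op swap13 a b + perm_op swap23 a b)
      + \<gamma> * (perm_op id a b + perm_op swap12 a b + perm_op swap13 a b + perm_op swap23 a b
          + perm_op rotl a b + perm_op rotr a b)"
    unfolding ab twirl3_O_plus_sq_entry[OF h] d_def[symmetric] O_plus_sq_twirl_coefficients(1,2)[OF nz]
      \<gamma>_def[symmetric] perm_count_eq_sum_perm_op perm_op_id[symmetric]
    by (simp add: algebra_simps)
  also have "\<dots> = perm_comb (4 + 3 * (d - 3) + \<gamma>) (d - 3 + \<gamma>) \<gamma> a b"
    by (simp add: perm_comb_def algebra_simps)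
  finally show "twirl3 \<mu> (mmul O_plus O_plus) a b =
      perm_comb ((d * (d + 1)\<^sup>2 - 4) / (d + 2)) (d * (d\<^sup>2 - 1) / (d + 2)) (((d - 1) * d\<^sup>2 + 6) / (d + 2)) a b"
    unfolding \<gamma>_def O_plus_sq_twirl_coefficients(3,4)[OF nz] .
qed

section \<open>Traces of permutation operators against \<open>\<rho>\<^sup>\<otimes>\<^sup>3\<close>\<close>

text \<open>\<open>tensor_cube R\<close> is \<open>R\<^sup>\<otimes>\<^sup>3\<close> written in the basis of \<open>H\<^sub>A\<^sup>\<otimes>\<^sup>3 \<otimes> H\<^sub>B\<^sup>\<otimes>\<^sup>3\<close>.\<close>

definition tensor_cube :: "('n \<times> 'm) op \<Rightarrow> ('n \<times> 'n \<times> 'n) \<times> ('m \<times> 'm \<times> 'm) \<Rightarrow>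
    ('n \<times> 'n \<times> 'n) \<times> ('m \<times> 'm \<times> 'm) \<Rightarrow> complex" where
  "tensor_cube R = (\<lambda>((a1, a2, a3), (b1, b2, b3)) ((a1', a2', a3'), (b1', b2', b3')).
     R (a1, b1) (a1', b1') * R (a2, b2) (a2', b2') * R (a3, b3) (a3', b3'))"

lemma tr_AB3_eq_tensor_cube:
  "tr_AB3 MA MB R =
    (\<Sum>a\<in>UNIV. \<Sum>a'\<in>UNIV. \<Sum>b\<in>UNIV. \<Sum>b'\<in>UNIV. MA a a' * MB b b' * tensor_cube R (a', b') (a, b))"
  unfolding tr_AB3_def tensor_cube_def by (simp add: case_prod_beta)

lemma tr_AB3_add_left: "tr_AB3 (\<lambda>a a'. X a a' + Y a a') MB R = tr_AB3 X MB R + tr_AB3 Y MB R"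
  unfolding tr_AB3_eq_tensor_cube by (simp add: distrib_right sum.distrib)

lemma tr_AB3_add_right: "tr_AB3 MA (\<lambda>b b'. X b b' + Y b b') R = tr_AB3 MA X R + tr_AB3 MA Y R"
  unfolding tr_AB3_eq_tensor_cube by (simp add: distrib_right distrib_left sum.distrib)

lemma tr_AB3_scale_left: "tr_AB3 (\<lambda>a a'. c * X a a') MB R = c * tr_AB3 X MB R"
  unfolding tr_AB3_eq_tensor_cube by (simp add: sum_distrib_left mult.assoc)

lemma tr_AB3_scale_right: "tr_AB3 MA (\<lambda>b b'. c * X b b') R = c * tr_AB3 MA X R"
  unfolding tr_AB3_eq_tensor_cube by (simp add: sum_distrib_left mult_ac)

definition perm_trace ::
  "('n::finite \<times> 'm::finite) op \<Rightarrow> ('n \<times> 'n \<times> 'n \<Rightarrow> 'n \<times> 'n \<times> 'n) \<Rightarrow>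
    ('m \<times> 'm \<times> 'm \<Rightarrow> 'm \<times> 'm \<times> 'm) \<Rightarrow> complex" where
  "perm_trace R f g = tr_AB3 (perm_op f) (perm_op g) R"

lemma sum_of_bool_delta: "(\<Sum>a\<in>UNIV. of_bool (a = t) * F a) = (F t :: complex)"
  for t :: "'a::finite"
  by (simp add: of_bool_def if_distrib[where f = "\<lambda>z. z * _"] cong: if_cong)

lemma sum4_of_bool_delta:
  fixes H :: "'a::finite \<Rightarrow> 'a \<Rightarrow> 'b::finite \<Rightarrow> 'b \<Rightarrow> complex"
  shows "(\<Sum>a\<in>UNIV. \<Sum>a'\<in>UNIV. \<Sum>b\<in>UNIV. \<Sum>b'\<in>UNIV. of_bool (a = f a') * of_bool (b = g b') * H a a' b b')
    = (\<Sum>a'\<in>UNIV. \<Sum>b'\<in>UNIV. H (f a') a' (g b') b')"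
proof -
  have "(\<Sum>a\<in>UNIV. \<Sum>a'\<in>UNIV. \<Sum>b\<in>UNIV. \<Sum>b'\<in>UNIV. of_bool (a = f a') * of_bool (b = g b') * H a a' b b')
    = (\<Sum>a'\<in>UNIV. \<Sum>a\<in>UNIV. of_bool (a = f a') * (\<Sum>b\<in>UNIV. \<Sum>b'\<in>UNIV. of_bool (b = g b') * H a a' b b'))"
    by (subst sum.swap) (simp only: sum_distrib_left mult.assoc)
  also have "\<dots> = (\<Sum>a'\<in>UNIV. \<Sum>b\<in>UNIV. \<Sum>b'\<in>UNIV. of_bool (b = g b') * H (f a') a' b b')"
    by (simp only: sum_of_bool_delta)
  also have "\<dots> = (\<Sum>a'\<in>UNIV. \<Sum>b'\<in>UNIV. \<Sum>b\<in>UNIV. of_bool (b = g b') * H (f a') a' b b')"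
    by (rule sum.cong[OF refl], rule sum.swap)
  also have "\<dots> = (\<Sum>a'\<in>UNIV. \<Sum>b'\<in>UNIV. H (f a') a' (g b') b')"
    by (simp only: sum_of_bool_delta)
  finally show ?thesis .
qed

lemma perm_trace_eq: "perm_trace R f g = (\<Sum>a'\<in>UNIV. \<Sum>b'\<in>UNIV. tensor_cube R (a', b') (f a', g b'))"
  unfolding perm_trace_def tr_AB3_eq_tensor_cube perm_op_def by (rule sum4_of_bool_delta)

lemma perm_trace_conj:
  assumes "bij P" "bij P'"
    and "\<And>a a' b b'. tensor_cube R (P a', P' b') (P a, P' b) = tensor_cube R (a', b') (a, b)"
    and "\<And>x. f (P x) = P (f' x)" "\<And>y. g (P' y) = P' (g' y)"
  shows "perm_trace R f g = perm_trace R f' g'"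
proof -
  have "perm_trace R f g = (\<Sum>a'\<in>UNIV. \<Sum>b'\<in>UNIV. tensor_cube R (P a', b') (f (P a'), g b'))"
    unfolding perm_trace_eq by (rule sum.reindex_bij_betw[OF assms(1), symmetric])
  also have "\<dots> = (\<Sum>a'\<in>UNIV. \<Sum>b'\<in>UNIV. tensor_cube R (P a', P' b') (f (P a'), g (P' b')))"
    by (intro sum.cong refl sum.reindex_bij_betw[OF assms(2), symmetric])
  also have "\<dots> = perm_trace R f' g'"
    by (simp only: perm_trace_eq assms(3-5))
  finally show ?thesis .
qed

lemma bij_triple_perms: "bij swap12" "bij swap13" "bij swap23" "bij rotl" "bij rotr"
proof -
  show "bij swap12" "bij swap13" "bij swap23"
    by (rule involuntory_imp_bij; simp add: split_paired_all)+
  show "bij rotl"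
    by (rule o_bij[where g = rotr]) (simp_all add: fun_eq_iff)
  show "bij rotr"
    by (rule o_bij[where g = rotl]) (simp_all add: fun_eq_iff)
qed

lemma perm_trace_conj_swap12:
  assumes "\<And>x. f (swap12 x) = swap12 (f' x)" "\<And>y. g (swap12 y) = swap12 (g' y)"
  shows "perm_trace R f g = perm_trace R f' g'"
  by (rule perm_trace_conj[where P = swap12 and P' = swap12])
     (simp_all add: bij_triple_perms assms tensor_cube_def split_paired_all mult_ac)

lemma perm_trace_conj_swap13:
  assumes "\<And>x. f (swap13 x) = swap13 (f' x)" "\<And>y. g (swap13 y) = swap13 (g' y)"
  shows "perm_trace R f g = perm_trace R f' g'"
  by (rule perm_trace_conj[where P = swap13 and P' = swap13])
     (simp_all add: bij_triple_perms assms tensor_cube_def split_paired_all mult_ac)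

lemma perm_trace_conj_swap23:
  assumes "\<And>x. f (swap23 x) = swap23 (f' x)" "\<And>y. g (swap23 y) = swap23 (g' y)"
  shows "perm_trace R f g = perm_trace R f' g'"
  by (rule perm_trace_conj[where P = swap23 and P' = swap23])
     (simp_all add: bij_triple_perms assms tensor_cube_def split_paired_all mult_ac)

lemma perm_trace_conj_rotl:
  assumes "\<And>x. f (rotl x) = rotl (f' x)" "\<And>y. g (rotl y) = rotl (g' y)"
  shows "perm_trace R f g = perm_trace R f' g'"
  by (rule perm_trace_conj[where P = rotl and P' = rotl])
     (simp_all add: bij_triple_perms assms tensor_cube_def split_paired_all mult_ac)

lemma perm_trace_conj_rotr:
  assumes "\<And>x. f (rotr x) = rotr (f' x)" "\<And>y. g (rotr y) = rotr (g' y)"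
  shows "perm_trace R f g = perm_trace R f' g'"
  by (rule perm_trace_conj[where P = rotr and P' = rotr])
     (simp_all add: bij_triple_perms assms tensor_cube_def split_paired_all mult_ac)

text \<open>Each equation moves a pair \<open>(f, g)\<close> to the representative of its simultaneous conjugacy
  class used below.\<close>

lemma perm_trace_orbit_reps:
  "perm_trace R id swap13 = perm_trace R id swap12"
  "perm_trace R id swap23 = perm_trace R id swap12"
  "perm_trace R id rotr = perm_trace R id rotl"
  "perm_trace R swap13 id = perm_trace R swap12 id"
  "perm_trace R swap23 id = perm_trace R swap12 id"
  "perm_trace R rotr id = perm_trace R rotl id"
  "perm_trace R swap13 swap13 = perm_trace R swap12 swap12"
  "perm_trace R swap23 swap23 = perm_trace R swap12 swap12"
  "perm_trace R swap12 swap13 = perm_trace R swap12 swap23"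
  "perm_trace R swap13 swap12 = perm_trace R swap12 swap23"
  "perm_trace R swap13 swap23 = perm_trace R swap12 swap23"
  "perm_trace R swap23 swap12 = perm_trace R swap12 swap23"
  "perm_trace R swap23 swap13 = perm_trace R swap12 swap23"
  "perm_trace R swap12 rotr = perm_trace R swap12 rotl"
  "perm_trace R swap13 rotl = perm_trace R swap12 rotl"
  "perm_trace R swap13 rotr = perm_trace R swap12 rotl"
  "perm_trace R swap23 rotl = perm_trace R swap12 rotl"
  "perm_trace R swap23 rotr = perm_trace R swap12 rotl"
  "perm_trace R rotr swap12 = perm_trace R rotl swap12"
  "perm_trace R rotl swap13 = perm_trace R rotl swap12"
  "perm_trace R rotr swap13 = perm_trace R rotl swap12"
  "perm_trace R rotl swap23 = perm_trace R rotl swap12"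
  "perm_trace R rotr swap23 = perm_trace R rotl swap12"
  "perm_trace R rotr rotr = perm_trace R rotl rotl"
  "perm_trace R rotr rotl = perm_trace R rotl rotr"
  by (rule perm_trace_conj_swap12 perm_trace_conj_swap13 perm_trace_conj_swap23 perm_trace_conj_rotl
      perm_trace_conj_rotr; force simp: split_paired_all)+

lemma tr_AB3_perm_comb:
  "tr_AB3 (perm_comb \<alpha> \<beta> \<gamma>) (perm_comb \<alpha> \<beta> \<gamma>) R =
     \<alpha>\<^sup>2 * perm_trace R id id
     + 3 * \<alpha> * \<beta> * (perm_trace R id swap12 + perm_trace R swap12 id)
     + 2 * \<alpha> * \<gamma> * (perm_trace R id rotl + perm_trace R rotl id)
     + 3 * \<beta>\<^sup>2 * perm_trace R swap12 swap12 + 6 * \<beta>\<^sup>2 * perm_trace R swap12 swap23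
     + 6 * \<beta> * \<gamma> * (perm_trace R swap12 rotl + perm_trace R rotl swap12)
     + 2 * \<gamma>\<^sup>2 * perm_trace R rotl rotl + 2 * \<gamma>\<^sup>2 * perm_trace R rotl rotr"
  unfolding perm_comb_def tr_AB3_add_left tr_AB3_add_right tr_AB3_scale_left tr_AB3_scale_right
    perm_trace_def[symmetric] perm_trace_orbit_reps
  by (simp add: algebra_simps power2_eq_square)

lemma perm_trace_index_sum:
  "perm_trace R f g = (\<Sum>(x1, x2, x3, y1, y2, y3)\<in>UNIV.
     tensor_cube R ((x1, x2, x3), (y1, y2, y3)) (f (x1, x2, x3), g (y1, y2, y3)))"
  unfolding perm_trace_eq by (simp add: sum_UNIV_pairs)

lemma sum_if_const_cond: "(\<Sum>x\<in>A. if P then f x else 0) = (if P then sum f A else 0)"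
  by simp

lemma tr_mmul_kron_idop_left:
  "tr (mmul X (kron idop M)) = (\<Sum>a\<in>UNIV. \<Sum>b\<in>UNIV. \<Sum>b'\<in>UNIV. X (a, b) (a, b') * M b' b)"
  for X :: "('n::finite \<times> 'm::finite) op"
  unfolding tr_def mmul_def kron_def idop_def
  by (simp add: sum_UNIV_pairs if_distrib[where f = "\<lambda>z. _ * z"] if_distrib[where f = "\<lambda>z. z * _"] sum_if_const_cond
      cong: if_cong)

lemma tr_mmul_kron_idop_right:
  "tr (mmul X (kron M idop)) = (\<Sum>a\<in>UNIV. \<Sum>b\<in>UNIV. \<Sum>a'\<in>UNIV. X (a, b) (a', b) * M a' a)"
  for X :: "('n::finite \<times> 'm::finite) op"
  unfolding tr_def mmul_def kron_def idop_def
  by (simp add: sum_UNIV_pairs if_distrib[where f = "\<lambda>z. _ * z"] if_distrib[where f = "\<lambda>z. z * _"] sum_if_const_cond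
      cong: if_cong)

lemmas trace_defs = tr_def mmul_def ptrA_def ptrB_def kron_def ptransA_def

lemma perm_trace_id_id: "perm_trace R id id = tr R ^ 3"
proof -
  have "perm_trace R id id =
      (\<Sum>(x1, y1, x2, y2, x3, y3)\<in>UNIV. R (x3, y3) (x3, y3) * R (x2, y2) (x2, y2) * R (x1, y1) (x1, y1))"
    unfolding perm_trace_index_sum
    by (rule sum.reindex_bij_witness[where
          i = "\<lambda>(x1, y1, x2, y2, x3, y3). (x1, x2, x3, y1, y2, y3)"
          and j = "\<lambda>(x1, x2, x3, y1, y2, y3). (x1, y1, x2, y2, x3, y3)"])
       (auto simp: tensor_cube_def mult_ac)
  also have "\<dots> = tr R ^ 3"
    by (simp add: trace_defs sum_UNIV_pairs sum_distrib_left sum_distrib_right power3_eq_cube mult.assoc)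
  finally show ?thesis .
qed

lemma perm_trace_id_swap12: "perm_trace R id swap12 = tr (mmul (ptrA R) (ptrA R)) * tr R"
proof -
  have "perm_trace R id swap12 =
      (\<Sum>(x3, y3, y2, y1, x1, x2)\<in>UNIV. R (x2, y2) (x2, y1) * R (x1, y1) (x1, y2) * R (x3, y3) (x3, y3))"
    unfolding perm_trace_index_sum
    by (rule sum.reindex_bij_witness[where
          i = "\<lambda>(x3, y3, y2, y1, x1, x2). (x1, x2, x3, y1, y2, y3)"
          and j = "\<lambda>(x1, x2, x3, y1, y2, y3). (x3, y3, y2, y1, x1, x2)"])
       (auto simp: tensor_cube_def mult_ac)
  also have "\<dots> = tr (mmul (ptrA R) (ptrA R)) * tr R"
    by (simp add: trace_defs sum_UNIV_pairs sum_distrib_left sum_distrib_right power3_eq_cube mult.assoc)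
  finally show ?thesis .
qed

lemma perm_trace_swap12_id: "perm_trace R swap12 id = tr (mmul (ptrB R) (ptrB R)) * tr R"
proof -
  have "perm_trace R swap12 id =
      (\<Sum>(x3, y3, x1, x2, y2, y1)\<in>UNIV. R (x1, y1) (x2, y1) * R (x2, y2) (x1, y2) * R (x3, y3) (x3, y3))"
    unfolding perm_trace_index_sum
    by (rule sum.reindex_bij_witness[where
          i = "\<lambda>(x3, y3, x1, x2, y2, y1). (x1, x2, x3, y1, y2, y3)"
          and j = "\<lambda>(x1, x2, x3, y1, y2, y3). (x3, y3, x1, x2, y2, y1)"])
       (auto simp: tensor_cube_def mult_ac)
  also have "\<dots> = tr (mmul (ptrB R) (ptrB R)) * tr R"
    by (simp add: trace_defs sum_UNIV_pairs sum_distrib_left sum_distrib_right power3_eq_cube mult.assoc)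
  finally show ?thesis .
qed

lemma perm_trace_id_rotl: "perm_trace R id rotl = tr (mmul (ptrA R) (mmul (ptrA R) (ptrA R)))"
proof -
  have "perm_trace R id rotl =
      (\<Sum>(y2, y3, y1, x1, x3, x2)\<in>UNIV. R (x2, y2) (x2, y3) * R (x3, y3) (x3, y1) * R (x1, y1) (x1, y2))"
    unfolding perm_trace_index_sum
    by (rule sum.reindex_bij_witness[where
          i = "\<lambda>(y2, y3, y1, x1, x3, x2). (x1, x2, x3, y1, y2, y3)"
          and j = "\<lambda>(x1, x2, x3, y1, y2, y3). (y2, y3, y1, x1, x3, x2)"])
       (auto simp: tensor_cube_def mult_ac)
  also have "\<dots> = tr (mmul (ptrA R) (mmul (ptrA R) (ptrA R)))"
    by (simp add: trace_defs sum_UNIV_pairs sum_distrib_left sum_distrib_right power3_eq_cube mult.assoc)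
  finally show ?thesis .
qed

lemma perm_trace_rotl_id: "perm_trace R rotl id = tr (mmul (ptrB R) (mmul (ptrB R) (ptrB R)))"
proof -
  have "perm_trace R rotl id =
      (\<Sum>(x1, x2, x3, y3, y2, y1)\<in>UNIV. R (x1, y1) (x2, y1) * R (x2, y2) (x3, y2) * R (x3, y3) (x1, y3))"
    unfolding perm_trace_index_sum
    by (rule sum.reindex_bij_witness[where
          i = "\<lambda>(x1, x2, x3, y3, y2, y1). (x1, x2, x3, y1, y2, y3)"
          and j = "\<lambda>(x1, x2, x3, y1, y2, y3). (x1, x2, x3, y3, y2, y1)"])
       (auto simp: tensor_cube_def mult_ac)
  also have "\<dots> = tr (mmul (ptrB R) (mmul (ptrB R) (ptrB R)))"
    by (simp add: trace_defs sum_UNIV_pairs sum_distrib_left sum_distrib_right power3_eq_cube mult.assoc)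
  finally show ?thesis .
qed

lemma perm_trace_swap12_swap12: "perm_trace R swap12 swap12 = tr (mmul R R) * tr R"
proof -
  have "perm_trace R swap12 swap12 =
      (\<Sum>(x3, y3, x1, y1, x2, y2)\<in>UNIV. R (x1, y1) (x2, y2) * R (x2, y2) (x1, y1) * R (x3, y3) (x3, y3))"
    unfolding perm_trace_index_sum
    by (rule sum.reindex_bij_witness[where
          i = "\<lambda>(x3, y3, x1, y1, x2, y2). (x1, x2, x3, y1, y2, y3)"
          and j = "\<lambda>(x1, x2, x3, y1, y2, y3). (x3, y3, x1, y1, x2, y2)"])
       (auto simp: tensor_cube_def mult_ac)
  also have "\<dots> = tr (mmul R R) * tr R"
    by (simp add: trace_defs sum_UNIV_pairs sum_distrib_left sum_distrib_right power3_eq_cube mult.assoc)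
  finally show ?thesis .
qed

lemma perm_trace_swap12_swap23: "perm_trace R swap12 swap23 = tr (mmul R (kron (ptrB R) (ptrA R)))"
proof -
  have "perm_trace R swap12 swap23 =
      (\<Sum>(x2, y2, x1, y3, x3, y1)\<in>UNIV. R (x2, y2) (x1, y3) * R (x1, y1) (x2, y1) * R (x3, y3) (x3, y2))"
    unfolding perm_trace_index_sum
    by (rule sum.reindex_bij_witness[where
          i = "\<lambda>(x2, y2, x1, y3, x3, y1). (x1, x2, x3, y1, y2, y3)"
          and j = "\<lambda>(x1, x2, x3, y1, y2, y3). (x2, y2, x1, y3, x3, y1)"])
       (auto simp: tensor_cube_def mult_ac)
  also have "\<dots> = tr (mmul R (kron (ptrB R) (ptrA R)))"
    by (simp add: trace_defs sum_UNIV_pairs sum_distrib_left sum_distrib_right power3_eq_cube mult.assoc)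
  finally show ?thesis .
qed

lemma perm_trace_swap12_rotl: "perm_trace R swap12 rotl = tr (mmul (mmul R R) (kron idop (ptrA R)))"
proof -
  have "perm_trace R swap12 rotl =
      (\<Sum>(x1, y1, y3, x3, x2, y2)\<in>UNIV. R (x1, y1) (x2, y2) * R (x2, y2) (x1, y3) * R (x3, y3) (x3, y1))"
    unfolding perm_trace_index_sum
    by (rule sum.reindex_bij_witness[where
          i = "\<lambda>(x1, y1, y3, x3, x2, y2). (x1, x2, x3, y1, y2, y3)"
          and j = "\<lambda>(x1, x2, x3, y1, y2, y3). (x1, y1, y3, x3, x2, y2)"])
       (auto simp: tensor_cube_def mult_ac)
  also have "\<dots> = tr (mmul (mmul R R) (kron idop (ptrA R)))"
    unfolding tr_mmul_kron_idop_left
    by (simp add: trace_defs sum_UNIV_pairs sum_distrib_left sum_distrib_right power3_eq_cube mult.assoc)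
  finally show ?thesis .
qed

lemma perm_trace_rotl_swap12: "perm_trace R rotl swap12 = tr (mmul (mmul R R) (kron (ptrB R) idop))"
proof -
  have "perm_trace R rotl swap12 =
      (\<Sum>(x1, y1, x3, y3, x2, y2)\<in>UNIV. R (x1, y1) (x2, y2) * R (x2, y2) (x3, y1) * R (x3, y3) (x1, y3))"
    unfolding perm_trace_index_sum
    by (rule sum.reindex_bij_witness[where
          i = "\<lambda>(x1, y1, x3, y3, x2, y2). (x1, x2, x3, y1, y2, y3)"
          and j = "\<lambda>(x1, x2, x3, y1, y2, y3). (x1, y1, x3, y3, x2, y2)"])
       (auto simp: tensor_cube_def mult_ac)
  also have "\<dots> = tr (mmul (mmul R R) (kron (ptrB R) idop))"
    unfolding tr_mmul_kron_idop_right
    by (simp add: trace_defs sum_UNIV_pairs sum_distrib_left sum_distrib_right power3_eq_cube mult.assoc)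
  finally show ?thesis .
qed

lemma perm_trace_rotl_rotl: "perm_trace R rotl rotl = tr (mmul R (mmul R R))"
proof -
  have "perm_trace R rotl rotl =
      (\<Sum>(x1, y1, x2, y2, x3, y3)\<in>UNIV. R (x1, y1) (x2, y2) * R (x2, y2) (x3, y3) * R (x3, y3) (x1, y1))"
    unfolding perm_trace_index_sum
    by (rule sum.reindex_bij_witness[where
          i = "\<lambda>(x1, y1, x2, y2, x3, y3). (x1, x2, x3, y1, y2, y3)"
          and j = "\<lambda>(x1, x2, x3, y1, y2, y3). (x1, y1, x2, y2, x3, y3)"])
       (auto simp: tensor_cube_def mult_ac)
  also have "\<dots> = tr (mmul R (mmul R R))"
    by (simp add: trace_defs sum_UNIV_pairs sum_distrib_left sum_distrib_right power3_eq_cube mult.assoc)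
  finally show ?thesis .
qed

lemma perm_trace_rotl_rotr: "perm_trace R rotl rotr = tr (mmul (ptransA R) (mmul (ptransA R) (ptransA R)))"
proof -
  have "perm_trace R rotl rotr =
      (\<Sum>(x1, y3, x3, y2, x2, y1)\<in>UNIV. R (x3, y3) (x1, y2) * R (x2, y2) (x3, y1) * R (x1, y1) (x2, y3))"
    unfolding perm_trace_index_sum
    by (rule sum.reindex_bij_witness[where
          i = "\<lambda>(x1, y3, x3, y2, x2, y1). (x1, x2, x3, y1, y2, y3)"
          and j = "\<lambda>(x1, x2, x3, y1, y2, y3). (x1, y3, x3, y2, x2, y1)"])
       (auto simp: tensor_cube_def mult_ac)
  also have "\<dots> = tr (mmul (ptransA R) (mmul (ptransA R) (ptransA R)))"
    by (simp add: trace_defs sum_UNIV_pairs sum_distrib_left sum_distrib_right power3_eq_cube mult.assoc)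
  finally show ?thesis .
qed

lemmas perm_trace_class_reps =
  perm_trace_id_id perm_trace_id_swap12 perm_trace_swap12_id perm_trace_id_rotl perm_trace_rotl_id
  perm_trace_swap12_swap12 perm_trace_swap12_swap23 perm_trace_swap12_rotl perm_trace_rotl_swap12
  perm_trace_rotl_rotl perm_trace_rotl_rotr

theorem proposition23:
  fixes \<mu> :: "(complex^'n::finite^'n) measure"
    and \<rho> :: "('n \<times> 'n) op"
    and d :: complex
  assumes "CARD('n) \<ge> 2"
    and "d = of_nat CARD('n)"
    and "haar_measure \<mu>"
    and "density \<rho>"
  shows "tr_AB3 (twirl3 \<mu> (mmul O_plus O_plus)) (twirl3 \<mu> (mmul O_plus O_plus)) \<rho> =
    1 / (d + 2)^2 *
    ( (tr (mmul (ptrB \<rho>) (ptrB \<rho>)) + tr (mmul (ptrA \<rho>) (ptrA \<rho>)))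
        * 3 * d * (d - 1)^2 * (d + 1) * (d^2 + 3 * d + 4)
    + (tr (mmul (ptrB \<rho>) (mmul (ptrB \<rho>) (ptrB \<rho>))) + tr (mmul (ptrA \<rho>) (mmul (ptrA \<rho>) (ptrA \<rho>))))
        * 2 * (d - 1) * ((d - 1) * d^2 + 6) * (d^2 + 3 * d + 4)
    + tr (mmul \<rho> \<rho>) * 3 * d^2 * (d^2 - 1)^2
    + tr (mmul \<rho> (mmul \<rho> \<rho>)) * 2 * ((d - 1) * d^2 + 6)^2
    + tr (mmul \<rho> (kron (ptrB \<rho>) (ptrA \<rho>))) * 6 * d^2 * (d^2 - 1)^2
    + (tr (mmul (mmul \<rho> \<rho>) (kron (ptrB \<rho>) idop)) + tr (mmul (mmul \<rho> \<rho>) (kron idop (ptrA \<rho>))))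
        * 6 * d * (d - 1) * (d + 1) * ((d - 1) * d^2 + 6)
    + 2 * tr (mmul (ptransA \<rho>) (mmul (ptransA \<rho>) (ptransA \<rho>))) * ((d - 1) * d^2 + 6)^2
    + (d * (d + 1)^2 - 4)^2 )"
proof -
  \<comment> \<open>the identity holds for every \<open>d \<ge> 1\<close>\<close>
  have tr_rho: "tr \<rho> = 1"
    using assms(4) unfolding density_def by simp
  \<comment> \<open>with \<open>w\<close> for \<open>1 / (d + 2)\<close> the claim becomes a polynomial identity\<close>
  define w where "w = 1 / (d + 2)"
  have twirl: "twirl3 \<mu> (mmul O_plus O_plus) =
      perm_comb ((d * (d + 1)\<^sup>2 - 4) * w) (d * (d\<^sup>2 - 1) * w) (((d - 1) * d\<^sup>2 + 6) * w)"
    using twirl3_O_plus_sq[OF assms(3)] unfolding assms(2) w_def by simp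
  have w_sq: "1 / (d + 2)\<^sup>2 = w\<^sup>2"
    unfolding w_def by (simp add: power_one_over)
  show ?thesis
    unfolding twirl w_sq tr_AB3_perm_comb perm_trace_class_reps tr_rho power_one mult_1_right
    by algebra
qed

end
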